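(* Let $\mathbf{L}$ be a finite distributive lattice and $m,n\ge1$ integers. Let $\mathbf{D}_{n,m}:=(\mathbf{2}^n)^m$, where $\mathbf{2}^n$ is the Boolean lattice with $n$ atoms, and let $P_{n,m}\subseteq\mathbf{D}_{n,m}$ be the set of tuples $(a_1,\dots,a_m)$ with $a_i\neq 0$ for every $i$. Then a subset $F\subseteq\mathbf{L}$ is an $m$-prime $n$-filter if and only if $F=h^{-1}[P_{n,m}]$ for some lattice homomorphism $h\colon\mathbf{L}\to\mathbf{D}_{n,m}$.
   Context: For a set $X$, $Y\subseteq_n X$ means $Y$ is a non-empty subset of $X$ with $|Y|\le n$. An $n$-filter on a lattice is an upset $F$ such that for every non-empty finite $X\subseteq F$: if $\bigwedge Y\in F$ for every $Y\subseteq_n X$ then $\bigwedge X\in F$. The $n$-filters of $\mathbf{L}$ form a lattice $\mathrm{Fi}_n\mathbf{L}$ under inclusion. An $n$-filter $F$ is $m$-prime if for every non-empty finite family $(F_i)_{i\in I}$ of $n$-filters with $\bigcap_{i\in I}F_i\subseteq F$ there is $J\subseteq I$ with $1\le|J|\le m$ and $\bigcap_{j\in J}F_j\subseteq F$. The empty set and $\mathbf{L}$ count as $m$-prime $n$-filters. Lattice homomorphisms need not preserve bounds. *)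

theory Defs
  imports Main
begin

definition n_filter :: "nat \<Rightarrow> 'a::lattice set \<Rightarrow> bool" where
  "n_filter n F \<longleftrightarrow>
     (\<forall>x y. x \<in> F \<and> x \<le> y \<longrightarrow> y \<in> F) \<and>
     (\<forall>X. finite X \<and> X \<noteq> {} \<and> X \<subseteq> F \<and>
          (\<forall>Y. Y \<subseteq> X \<and> Y \<noteq> {} \<and> card Y \<le> n \<longrightarrow> Inf_fin Y \<in> F)
          \<longrightarrow> Inf_fin X \<in> F)"

text \<open>m-prime n-filters; by convention the empty set and the whole lattice count.\<close>
definition m_prime_n_filter :: "nat \<Rightarrow> nat \<Rightarrow> 'a::lattice set \<Rightarrow> bool" where
  "m_prime_n_filter n m F \<longleftrightarrow> n_filter n F \<and>
     (F = {} \<or> F = UNIV \<or>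
      (\<forall>(I::nat set) (Fs::nat \<Rightarrow> 'a set).
          finite I \<and> I \<noteq> {} \<and> (\<forall>i\<in>I. n_filter n (Fs i)) \<and> (\<Inter>i\<in>I. Fs i) \<subseteq> F
          \<longrightarrow> (\<exists>J\<subseteq>I. J \<noteq> {} \<and> card J \<le> m \<and> (\<Inter>j\<in>J. Fs j) \<subseteq> F)))"

text \<open>D_{n,m} = (2^n)^m, represented as functions nat \<Rightarrow> nat set that map each
  coordinate i < m to a subset of {..<n} and are {} outside; lattice operations
  are pointwise intersection / union.\<close>
definition D :: "nat \<Rightarrow> nat \<Rightarrow> (nat \<Rightarrow> nat set) set" where
  "D n m = {f. (\<forall>i<m. f i \<subseteq> {..<n}) \<and> (\<forall>i\<ge>m. f i = {})}"

definition P :: "nat \<Rightarrow> nat \<Rightarrow> (nat \<Rightarrow> nat set) set" where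
  "P n m = {f \<in> D n m. \<forall>i<m. f i \<noteq> {}}"

text \<open>Lattice homomorphism L \<rightarrow> D_{n,m} (bounds need not be preserved).\<close>
definition lattice_hom_D :: "nat \<Rightarrow> nat \<Rightarrow> ('a::lattice \<Rightarrow> (nat \<Rightarrow> nat set)) \<Rightarrow> bool" where
  "lattice_hom_D n m h \<longleftrightarrow> (\<forall>x. h x \<in> D n m) \<and>
     (\<forall>x y. h (inf x y) = (\<lambda>i. h x i \<inter> h y i)) \<and>
     (\<forall>x y. h (sup x y) = (\<lambda>i. h x i \<union> h y i))"

end

theory Submission
  imports Defs
begin

text \<open>
  Let \<open>h : L \<rightarrow> D\<^sub>n\<^sub>,\<^sub>m\<close> be a homomorphism.  Each coordinate of \<open>h x\<close> is a subset of an
  \<open>n\<close>-element set, so an empty intersection of coordinates is already witnessed by \<open>n\<close>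
  members; this makes \<open>h\<inverse>[P\<^sub>n\<^sub>,\<^sub>m]\<close> an \<open>n\<close>-filter.  It is \<open>m\<close>-prime because each of the \<open>m\<close>
  coordinates is controlled by a single member of any finite family of upsets whose
  intersection lies inside it.

  Conversely, in a finite distributive lattice every element outside an \<open>n\<close>-filter \<open>F\<close>
  is separated from \<open>F\<close> by the upset generated by at most \<open>n\<close> join-primes, so \<open>F\<close> is the
  intersection of such upsets, and \<open>m\<close>-primeness reduces this to \<open>m\<close> of them.  An
  intersection of \<open>m\<close> upsets generated by \<open>\<le> n\<close> join-primes is exactly \<open>h\<inverse>[P\<^sub>n\<^sub>,\<^sub>m]\<close> for the
  homomorphism recording in coordinate \<open>i\<close> which generators of the \<open>i\<close>-th upset lie below \<open>x\<close>.
\<close>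

definition join_prime :: "'a::lattice \<Rightarrow> bool" where
  "join_prime p \<longleftrightarrow> (\<forall>u v. p \<le> sup u v \<longrightarrow> p \<le> u \<or> p \<le> v)"

definition up_closure :: "'a::order set \<Rightarrow> 'a set" where
  "up_closure S = {x. \<exists>p\<in>S. p \<le> x}"

definition indicator_hom :: "nat \<Rightarrow> (nat \<Rightarrow> 'a::order list) \<Rightarrow> 'a \<Rightarrow> nat \<Rightarrow> nat set" where
  "indicator_hom m ps x i = (if i < m then {k. k < length (ps i) \<and> ps i ! k \<le> x} else {})"

subsection \<open>Join-primes\<close>

lemma join_prime_le_Sup_fin_iff:
  assumes "join_prime p" "finite A" "A \<noteq> {}"
  shows "p \<le> Sup_fin A \<longleftrightarrow> (\<exists>y\<in>A. p \<le> y)"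
  using assms(2,3)
proof (induction A rule: finite_ne_induct)
  case (insert x A)
  then show ?case
    using \<open>join_prime p\<close> unfolding join_prime_def by (auto intro: le_supI1 le_supI2)
qed simp

lemma join_prime_Inf_fin_UNIV: "join_prime (Inf_fin (UNIV :: 'a::{finite,lattice} set))"
  unfolding join_prime_def by (auto intro: le_supI1 Inf_fin.coboundedI)

lemma exists_join_prime_below:
  fixes z a :: "'a::{finite,distrib_lattice}"
  assumes "\<not> z \<le> a"
  shows "\<exists>p. join_prime p \<and> p \<le> z \<and> \<not> p \<le> a"
proof -
  let ?A = "{x. x \<le> z \<and> \<not> x \<le> a}"
  obtain p where p: "p \<in> ?A" and minimal: "\<And>b. b \<in> ?A \<Longrightarrow> b \<le> p \<Longrightarrow> p = b"
    using finite_has_minimal2[of ?A z] assms by auto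
  have "join_prime p" unfolding join_prime_def
  proof (intro allI impI)
    fix u v assume "p \<le> sup u v"
    then have split: "p = sup (inf p u) (inf p v)"
      by (metis inf.absorb1 inf_sup_distrib1)
    have "inf p w \<le> a \<or> p \<le> w" for w
      using minimal[of "inf p w"] p by (metis (mono_tags) inf.cobounded1 inf.cobounded2
          le_infI1 mem_Collect_eq)
    then show "p \<le> u \<or> p \<le> v"
      using p split by (metis (no_types, lifting) mem_Collect_eq sup_least)
  qed
  then show ?thesis using p by auto
qed

definition max_not_above :: "'a::{finite,lattice} \<Rightarrow> 'a" where
  "max_not_above p = Sup_fin {y. \<not> p \<le> y}"

lemma le_max_not_above_iff:
  fixes p :: "'a::{finite,lattice}"
  assumes "join_prime p" "\<not> p \<le> a"
  shows "y \<le> max_not_above p \<longleftrightarrow> \<not> p \<le> y"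
proof -
  have "\<not> p \<le> max_not_above p"
    using join_prime_le_Sup_fin_iff[OF assms(1), of "{y. \<not> p \<le> y}"] assms(2)
    unfolding max_not_above_def by auto
  then show ?thesis
    unfolding max_not_above_def by (auto intro: Sup_fin.coboundedI dest: order.trans)
qed

lemma n_filter_upward: "n_filter n F \<Longrightarrow> x \<in> F \<Longrightarrow> x \<le> y \<Longrightarrow> y \<in> F"
  unfolding n_filter_def by blast

lemma n_filter_InfI:
  assumes "n_filter n F" "finite X" "X \<noteq> {}" "X \<subseteq> F"
    and "\<And>Y. Y \<subseteq> X \<Longrightarrow> Y \<noteq> {} \<Longrightarrow> card Y \<le> n \<Longrightarrow> Inf_fin Y \<in> F"
  shows "Inf_fin X \<in> F"
proof -
  have "\<forall>Y. Y \<subseteq> X \<and> Y \<noteq> {} \<and> card Y \<le> n \<longrightarrow> Inf_fin Y \<in> F" using assms(5) by blast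
  then show ?thesis using assms(1-4) unfolding n_filter_def by simp
qed

subsection \<open>Homomorphisms into \<open>D\<^sub>n\<^sub>,\<^sub>m\<close>\<close>

lemma lattice_hom_D_in_D: "lattice_hom_D n m h \<Longrightarrow> h x \<in> D n m"
  unfolding lattice_hom_D_def by blast

lemma lattice_hom_D_mono:
  assumes "lattice_hom_D n m h" "x \<le> y"
  shows "h x i \<subseteq> h y i"
proof -
  have "h x = h (inf x y)" using assms(2) by (simp add: inf.absorb1)
  then show ?thesis using assms(1) unfolding lattice_hom_D_def by (metis Int_lower2)
qed

lemma lattice_hom_D_Inf_fin:
  assumes "lattice_hom_D n m h" "finite Y" "Y \<noteq> {}"
  shows "h (Inf_fin Y) i = (\<Inter>y\<in>Y. h y i)"
  using assms(2,3) by (induction Y rule: finite_ne_induct)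
    (use assms(1) in \<open>auto simp: lattice_hom_D_def\<close>)

lemma lattice_hom_D_Sup_fin:
  assumes "lattice_hom_D n m h" "finite Y" "Y \<noteq> {}"
  shows "h (Sup_fin Y) i = (\<Union>y\<in>Y. h y i)"
  using assms(2,3) by (induction Y rule: finite_ne_induct)
    (use assms(1) in \<open>auto simp: lattice_hom_D_def\<close>)

lemma in_vimage_P_iff:
  assumes "lattice_hom_D n m h"
  shows "x \<in> h -` P n m \<longleftrightarrow> (\<forall>i<m. h x i \<noteq> {})"
  using lattice_hom_D_in_D[OF assms] unfolding P_def by auto

lemma small_subfamily_empty_Inter:
  assumes "n \<ge> 1" "\<forall>x\<in>X. A x \<subseteq> {..<n}" "(\<Inter>x\<in>X. A x) = {}"
  shows "\<exists>Y\<subseteq>X. Y \<noteq> {} \<and> card Y \<le> n \<and> (\<Inter>y\<in>Y. A y) = {}"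
proof -
  have "\<forall>k. \<exists>x\<in>X. k \<notin> A x" using assms(3) by blast
  then obtain f where f: "\<And>k. f k \<in> X" "\<And>k. k \<notin> A (f k)" by metis
  \<comment> \<open>Only the points \<open>k < n\<close> can lie in some \<open>A x\<close>, so their witnesses suffice.\<close>
  let ?Y = "f ` {..<n}"
  have "(\<Inter>y\<in>?Y. A y) = {}"
  proof (rule equals0I)
    fix k assume k: "k \<in> (\<Inter>y\<in>?Y. A y)"
    then have "k \<in> A (f 0)" using assms(1) by auto
    then have "k < n" using assms(2) f(1)[of 0] by blast
    then show False using k f(2)[of k] by auto
  qed
  moreover have "?Y \<subseteq> X" using f(1) by auto
  moreover have "?Y \<noteq> {}" using assms(1) by (simp add: lessThan_empty_iff)
  moreover have "card ?Y \<le> n" using card_image_le[of "{..<n}" f] by simp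
  ultimately show ?thesis by blast
qed

lemma n_filter_vimage_P:
  assumes h: "lattice_hom_D n m h" and "n \<ge> 1"
  shows "n_filter n (h -` P n m)"
  unfolding n_filter_def
proof (intro conjI allI impI)
  fix x y assume "x \<in> h -` P n m \<and> x \<le> y"
  then show "y \<in> h -` P n m"
    using lattice_hom_D_mono[OF h, of x y] unfolding in_vimage_P_iff[OF h] by blast
next
  fix X assume X: "finite X \<and> X \<noteq> {} \<and> X \<subseteq> h -` P n m \<and>
     (\<forall>Y. Y \<subseteq> X \<and> Y \<noteq> {} \<and> card Y \<le> n \<longrightarrow> Inf_fin Y \<in> h -` P n m)"
  have "(\<Inter>x\<in>X. h x i) \<noteq> {}" if "i < m" for i
  proof
    assume "(\<Inter>x\<in>X. h x i) = {}"
    moreover have "\<forall>x\<in>X. h x i \<subseteq> {..<n}"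
      using lattice_hom_D_in_D[OF h] \<open>i < m\<close> unfolding D_def by simp
    ultimately obtain Y where Y: "Y \<subseteq> X" "Y \<noteq> {}" "card Y \<le> n" "(\<Inter>y\<in>Y. h y i) = {}"
      using small_subfamily_empty_Inter[OF \<open>n \<ge> 1\<close>, of X "\<lambda>x. h x i"] by blast
    have "finite Y" using X Y(1) finite_subset by blast
    then have "h (Inf_fin Y) i = {}" using lattice_hom_D_Inf_fin[OF h _ Y(2)] Y(4) by simp
    moreover have "Inf_fin Y \<in> h -` P n m" using X Y by blast
    ultimately show False using \<open>i < m\<close> unfolding in_vimage_P_iff[OF h] by blast
  qed
  then show "Inf_fin X \<in> h -` P n m"
    unfolding in_vimage_P_iff[OF h] using lattice_hom_D_Inf_fin[OF h, of X] X by simp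
qed

lemma vimage_P_prime:
  assumes h: "lattice_hom_D n m h" and "m \<ge> 1"
    and I: "finite I" "I \<noteq> {}" and Fs: "\<forall>i\<in>I. n_filter n (Fs i)"
    and sub: "(\<Inter>i\<in>I. Fs i) \<subseteq> h -` P n m"
  shows "\<exists>J\<subseteq>I. J \<noteq> {} \<and> card J \<le> m \<and> (\<Inter>j\<in>J. Fs j) \<subseteq> h -` P n m"
proof -
  have "\<exists>j\<in>I. \<forall>x\<in>Fs j. h x c \<noteq> {}" if "c < m" for c
  proof (rule ccontr)
    assume "\<not> ?thesis"
    then obtain a where a: "\<And>j. j \<in> I \<Longrightarrow> a j \<in> Fs j \<and> h (a j) c = {}" by metis
    \<comment> \<open>The join of the witnesses lies in every \<open>Fs j\<close>, hence in the preimage, yet has empty coordinate \<open>c\<close>.\<close>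
    let ?b = "Sup_fin (a ` I)"
    have "?b \<in> Fs j" if "j \<in> I" for j
    proof -
      have "a j \<le> ?b" using that I by (intro Sup_fin.coboundedI) auto
      then show ?thesis using n_filter_upward Fs that a[OF that] by blast
    qed
    then have "?b \<in> h -` P n m" using sub by blast
    then have "h ?b c \<noteq> {}" using \<open>c < m\<close> in_vimage_P_iff[OF h] by blast
    moreover have "h ?b c = (\<Union>j\<in>I. h (a j) c)"
      using lattice_hom_D_Sup_fin[OF h, of "a ` I" c] I by simp
    ultimately show False using a by simp
  qed
  then obtain g where g: "\<And>c. c < m \<Longrightarrow> g c \<in> I \<and> (\<forall>x\<in>Fs (g c). h x c \<noteq> {})" by metis
  let ?J = "g ` {..<m}"
  have "(\<Inter>j\<in>?J. Fs j) \<subseteq> h -` P n m"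
  proof
    fix x assume x: "x \<in> (\<Inter>j\<in>?J. Fs j)"
    have "h x c \<noteq> {}" if "c < m" for c using g[OF that] x that by blast
    then show "x \<in> h -` P n m" using in_vimage_P_iff[OF h] by blast
  qed
  moreover have "?J \<subseteq> I" using g by auto
  moreover have "?J \<noteq> {}" using \<open>m \<ge> 1\<close> by (simp add: lessThan_empty_iff)
  moreover have "card ?J \<le> m" using card_image_le[of "{..<m}" g] by simp
  ultimately show ?thesis by blast
qed

lemma up_closure_set_conv_nth: "x \<in> up_closure (set xs) \<longleftrightarrow> (\<exists>k<length xs. xs ! k \<le> x)"
  unfolding up_closure_def by (auto simp: in_set_conv_nth intro: nth_mem)

lemma lattice_hom_indicator_hom:
  assumes ps: "\<forall>i<m. (\<forall>p\<in>set (ps i). join_prime p) \<and> length (ps i) \<le> n"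
  shows "lattice_hom_D n m (indicator_hom m ps)"
  unfolding lattice_hom_D_def
proof (intro conjI allI)
  fix x show "indicator_hom m ps x \<in> D n m"
    using ps unfolding indicator_hom_def D_def by auto
next
  fix x y
  have "ps i ! k \<le> sup x y \<longleftrightarrow> ps i ! k \<le> x \<or> ps i ! k \<le> y" if "i < m" "k < length (ps i)" for i k
  proof -
    have "join_prime (ps i ! k)" using ps that nth_mem by blast
    then show ?thesis unfolding join_prime_def by (blast intro: le_supI1 le_supI2)
  qed
  then show "indicator_hom m ps (sup x y) = (\<lambda>i. indicator_hom m ps x i \<union> indicator_hom m ps y i)"
    unfolding indicator_hom_def by (auto simp: fun_eq_iff)
qed (auto simp: indicator_hom_def fun_eq_iff)

lemma vimage_P_indicator_hom:
  assumes "\<forall>i<m. length (ps i) \<le> n"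
  shows "indicator_hom m ps -` P n m = (\<Inter>i<m. up_closure (set (ps i)))"
  using assms unfolding indicator_hom_def P_def D_def by (auto simp: up_closure_set_conv_nth)

lemma n_filter_up_closure:
  assumes "n \<ge> 1" "\<forall>p\<in>set ps. join_prime p" "length ps \<le> n"
  shows "n_filter n (up_closure (set ps))"
proof -
  have "indicator_hom 1 (\<lambda>_. ps) -` P n 1 = up_closure (set ps)"
    using vimage_P_indicator_hom[of 1 "\<lambda>_. ps" n] assms(3) by (simp add: lessThan_Suc)
  then show ?thesis
    using n_filter_vimage_P[OF lattice_hom_indicator_hom \<open>n \<ge> 1\<close>, of 1 "\<lambda>_. ps"] assms by simp
qed

subsection \<open>Representing \<open>m\<close>-prime \<open>n\<close>-filters\<close>

lemma n_filter_cover: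
  fixes F :: "'a::{finite,distrib_lattice} set"
  assumes F: "n_filter n F" and "a \<notin> F" and "n \<ge> 1"
  shows "\<exists>ps. length ps \<le> n \<and> (\<forall>p\<in>set ps. join_prime p \<and> \<not> p \<le> a) \<and> F \<subseteq> up_closure (set ps)"
proof -
  let ?S = "{p. join_prime p \<and> \<not> p \<le> a}"
  have "\<exists>H\<subseteq>?S. card H \<le> n \<and> F \<subseteq> up_closure H"
  proof (rule ccontr)
    assume no_cover: "\<not> ?thesis"
    \<comment> \<open>Each small set \<open>H\<close> of join-primes is avoided by some \<open>w \<in> F\<close>, and \<open>w\<close> lies below all \<open>max_not_above p\<close>, \<open>p \<in> H\<close>.\<close>
    have small_in_F: "Inf_fin (max_not_above ` H) \<in> F"
      if H: "H \<subseteq> ?S" "card H \<le> n" "H \<noteq> {}" for H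
    proof -
      have "\<not> F \<subseteq> up_closure H" using no_cover H(1,2) by blast
      then obtain w where w: "w \<in> F" "w \<notin> up_closure H" by blast
      have "w \<le> max_not_above p" if "p \<in> H" for p
        using le_max_not_above_iff[of p a w] H(1) w(2) that unfolding up_closure_def by blast
      then have "w \<le> Inf_fin (max_not_above ` H)"
        using H(3) by (intro Inf_fin.boundedI) auto
      then show ?thesis using n_filter_upward[OF F w(1)] by blast
    qed
    let ?X = "max_not_above ` ?S"
    have "F \<noteq> {}"
    proof
      assume "F = {}"
      then have "{} \<subseteq> ?S \<and> card {} \<le> n \<and> F \<subseteq> up_closure {}" by simp
      then show False using no_cover by blast
    qed
    then obtain f where "f \<in> F" by blast
    then have "\<not> f \<le> a" using n_filter_upward[OF F] \<open>a \<notin> F\<close> by blast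
    then have "?X \<noteq> {}" using exists_join_prime_below by blast
    moreover have "?X \<subseteq> F"
    proof
      fix x assume "x \<in> ?X"
      then obtain p where "p \<in> ?S" "x = max_not_above p" by blast
      then show "x \<in> F" using small_in_F[of "{p}"] \<open>n \<ge> 1\<close> by simp
    qed
    moreover have "Inf_fin Y \<in> F" if Y: "Y \<subseteq> ?X" "Y \<noteq> {}" "card Y \<le> n" for Y
    proof -
      obtain H where H: "H \<subseteq> ?S" "inj_on max_not_above H" "Y = max_not_above ` H"
        using Y(1) unfolding subset_image_inj by blast
      then have "card H \<le> n" "H \<noteq> {}" using Y(2,3) by (auto simp: card_image)
      then show ?thesis using small_in_F[OF H(1)] H(3) by blast
    qed
    ultimately have "Inf_fin ?X \<in> F" by (rule n_filter_InfI[OF F finite])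
    then have "\<not> Inf_fin ?X \<le> a" using n_filter_upward[OF F _] \<open>a \<notin> F\<close> by blast
    then obtain p where p: "join_prime p" "p \<le> Inf_fin ?X" "\<not> p \<le> a"
      using exists_join_prime_below by blast
    moreover have "Inf_fin ?X \<le> max_not_above p" using p by (intro Inf_fin.coboundedI) auto
    ultimately show False using le_max_not_above_iff[of p a p] by auto
  qed
  then obtain H where H: "H \<subseteq> ?S" "card H \<le> n" "F \<subseteq> up_closure H" by blast
  obtain ps where ps: "set ps = H" "distinct ps" using finite_distinct_list[OF finite] by blast
  then have "length ps \<le> n" using H(2) distinct_card by metis
  then show ?thesis using ps(1) H by blast
qed

lemma m_prime_Inter_subfamily:
  assumes "m_prime_n_filter n m F" "F \<noteq> {}" "F \<noteq> UNIV"
    and "finite A" "\<forall>a\<in>A. n_filter n (G a)" and F: "F = (\<Inter>a\<in>A. G a)"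
  shows "\<exists>J\<subseteq>A. J \<noteq> {} \<and> card J \<le> m \<and> F = (\<Inter>a\<in>J. G a)"
proof -
  obtain e where e: "bij_betw e {0..<card A} A"
    using ex_bij_betw_nat_finite[OF \<open>finite A\<close>] by blast
  have "(\<Inter>i\<in>{0..<card A}. G (e i)) = F" "{0..<card A} \<noteq> {}"
    using e F \<open>F \<noteq> UNIV\<close> by (auto simp: bij_betw_def image_comp[symmetric])
  then obtain J' where J': "J' \<subseteq> {0..<card A}" "J' \<noteq> {}" "card J' \<le> m"
      "(\<Inter>j\<in>J'. G (e j)) \<subseteq> F"
    using assms(1-3,5) e unfolding m_prime_n_filter_def bij_betw_def
    by (metis (no_types, lifting) finite_atLeastLessThan image_eqI order_refl)
  have "e ` J' \<subseteq> A" "F \<subseteq> (\<Inter>a\<in>e ` J'. G a)"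
    using J'(1) e F by (auto simp: bij_betw_def)
  moreover have "card (e ` J') \<le> m" using J'(3) card_image_le[of J' e] J'(1) finite_subset by fastforce
  ultimately show ?thesis using J'(2,4) by (intro exI[of _ "e ` J'"]) auto
qed

lemma surj_from_lessThan:
  assumes "finite J" "J \<noteq> {}" "card J \<le> m"
  shows "\<exists>g. g ` {..<m} = J"
proof -
  obtain e where e: "bij_betw e {..<card J} J"
    using ex_bij_betw_nat_finite[OF assms(1)] by (auto simp: atLeast0LessThan)
  have "0 < card J" using assms(1,2) by auto
  then have "(\<lambda>i. if i < card J then e i else e 0) ` {..<m} = J"
    using e assms(3) by (force simp: bij_betw_def)
  then show ?thesis by blast
qed

lemma m_prime_n_filter_representation:
  fixes F :: "'a::{finite,distrib_lattice} set"
  assumes F: "m_prime_n_filter n m F" and "n \<ge> 1" "m \<ge> 1"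
  shows "\<exists>ps. (\<forall>i<m. (\<forall>p\<in>set (ps i). join_prime p) \<and> length (ps i) \<le> n) \<and>
             F = (\<Inter>i<m. up_closure (set (ps i)))"
proof -
  consider "F = {}" | "F = UNIV" | "F \<noteq> {}" "F \<noteq> UNIV" by blast
  then show ?thesis
  proof cases
    case 1
    then show ?thesis using \<open>m \<ge> 1\<close>
      by (intro exI[of _ "\<lambda>_. []"]) (auto simp: up_closure_def lessThan_empty_iff)
  next
    case 2
    then show ?thesis using \<open>m \<ge> 1\<close> \<open>n \<ge> 1\<close> join_prime_Inf_fin_UNIV
      by (intro exI[of _ "\<lambda>_. [Inf_fin UNIV]"]) (auto simp: up_closure_def Inf_fin.coboundedI)
  next
    case 3
    have nF: "n_filter n F" using F unfolding m_prime_n_filter_def by blast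
    obtain cov where cov: "\<And>a. a \<notin> F \<Longrightarrow> length (cov a) \<le> n \<and>
        (\<forall>p\<in>set (cov a). join_prime p \<and> \<not> p \<le> a) \<and> F \<subseteq> up_closure (set (cov a))"
      using n_filter_cover[OF nF _ \<open>n \<ge> 1\<close>] by metis
    have "F = (\<Inter>a\<in>-F. up_closure (set (cov a)))"
      using cov by (fastforce simp: up_closure_def)
    moreover have "\<forall>a\<in>-F. n_filter n (up_closure (set (cov a)))"
      using cov n_filter_up_closure[OF \<open>n \<ge> 1\<close>] by blast
    ultimately obtain J where J: "J \<subseteq> -F" "J \<noteq> {}" "card J \<le> m"
        "F = (\<Inter>a\<in>J. up_closure (set (cov a)))"
      using m_prime_Inter_subfamily[OF F 3] by (metis finite)
    obtain g where "g ` {..<m} = J" using surj_from_lessThan[OF finite J(2,3)] by blast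
    then show ?thesis using J cov
      by (intro exI[of _ "cov \<circ> g"]) (auto simp: image_comp[symmetric])
  qed
qed

theorem mainTheorem11:
  fixes F :: "'a::{finite, distrib_lattice} set" and n m :: nat
  assumes "n \<ge> 1" and "m \<ge> 1"
  shows "m_prime_n_filter n m F \<longleftrightarrow> (\<exists>h. lattice_hom_D n m h \<and> F = h -` P n m)"
proof
  assume "m_prime_n_filter n m F"
  then obtain ps where ps: "\<forall>i<m. (\<forall>p\<in>set (ps i). join_prime p) \<and> length (ps i) \<le> n"
    and F: "F = (\<Inter>i<m. up_closure (set (ps i)))"
    using m_prime_n_filter_representation assms by blast
  show "\<exists>h. lattice_hom_D n m h \<and> F = h -` P n m"
    using lattice_hom_indicator_hom[OF ps] vimage_P_indicator_hom[of m ps n] ps F by auto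
next
  assume "\<exists>h. lattice_hom_D n m h \<and> F = h -` P n m"
  then obtain h where h: "lattice_hom_D n m h" and F: "F = h -` P n m" by blast
  show "m_prime_n_filter n m F"
    unfolding m_prime_n_filter_def F
    using n_filter_vimage_P[OF h \<open>n \<ge> 1\<close>] vimage_P_prime[OF h \<open>m \<ge> 1\<close>] by blast
qed

end
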